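(* Let $a,b,x$ be non-commuting indeterminates and define polynomials $d_n=d_n(a,b,x)\in\mathbb{Z}\langle a,b,x\rangle$ for $n\ge 1$ by $$d_1=1,\qquad d_n=d_{n-1}\,x+\sum_{k=2}^{n-1} d_{n-k}\,a\,d_k\,b\quad (n\ge 2),$$ and set $c_n(a,b,x)=a\,d_n(a,b,x)\,b$ for $n\ge1$. Then, in the ring $\mathbb{Z}\langle\langle a,b\rangle\rangle$ of formal power series in the non-commuting variables $a,b$, $$1-\sum_{n=1}^{\infty} c_n(a,b,ab-ba)=\Big(\sum_{n\ge 0}a^nb^n\Big)^{-1}.$$
   Context: $\mathbb{Z}\langle\langle a,b\rangle\rangle$ denotes formal power series in non-commuting variables $a,b$ with integer coefficients; a series with constant term $1$ is invertible there. $c_n(a,b,ab-ba)$ denotes the polynomial obtained from $c_n(a,b,x)$ by substituting $x\mapsto ab-ba$; since $c_n(a,b,ab-ba)$ is homogeneous of degree $2n$ in $a,b$, the infinite sum converges formally. *)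

theory Defs
  imports Main
begin

text \<open>Formal power series in non-commuting variables over the integers, with
variables drawn from an alphabet 'l: a series is its coefficient function on
words (lists of letters). Noncommutative polynomials are the finitely
supported series.\<close>

type_synonym 'l ser = "'l list \<Rightarrow> int"

definition szero :: "'l ser" where "szero = (\<lambda>w. 0)"
definition sone :: "'l ser" where "sone = (\<lambda>w. if w = [] then 1 else 0)"
definition sadd :: "'l ser \<Rightarrow> 'l ser \<Rightarrow> 'l ser" where "sadd f g = (\<lambda>w. f w + g w)"
definition ssub :: "'l ser \<Rightarrow> 'l ser \<Rightarrow> 'l ser" where "ssub f g = (\<lambda>w. f w - g w)"
definition smul :: "'l ser \<Rightarrow> 'l ser \<Rightarrow> 'l ser" where
  "smul f g = (\<lambda>w. \<Sum>i\<le>length w. f (take i w) * g (drop i w))"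
definition sletter :: "'l \<Rightarrow> 'l ser" where "sletter c = (\<lambda>w. if w = [c] then 1 else 0)"

fun spow :: "'l ser \<Rightarrow> nat \<Rightarrow> 'l ser" where
  "spow f 0 = sone"
| "spow f (Suc n) = smul f (spow f n)"

text \<open>Formal (coefficientwise) sum of a family of series; meaningful when each
coefficient receives only finitely many nonzero contributions.\<close>
definition fsum :: "(nat \<Rightarrow> 'l ser) \<Rightarrow> 'l ser" where
  "fsum F = (\<lambda>w. \<Sum>n\<in>{n. F n w \<noteq> 0}. F n w)"

datatype abx = La | Lb | Lx
datatype ab = Ta | Tb

function d :: "nat \<Rightarrow> abx ser" where
  "d n = (if n \<le> 1 then sone
          else sadd (smul (d (n - 1)) (sletter Lx))
                    (\<lambda>w. \<Sum>k\<in>{2..n-1}. smul (d (n - k)) (smul (sletter La) (smul (d k) (sletter Lb))) w))"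
  by auto
termination by (relation "measure id") auto

definition c :: "nat \<Rightarrow> abx ser" where
  "c n = smul (sletter La) (smul (d n) (sletter Lb))"

text \<open>Substitution a \<mapsto> a, b \<mapsto> b, x \<mapsto> ab - ba, for polynomials (finitely supported series).\<close>
fun limg :: "abx \<Rightarrow> ab ser" where
  "limg La = sletter Ta"
| "limg Lb = sletter Tb"
| "limg Lx = ssub (smul (sletter Ta) (sletter Tb)) (smul (sletter Tb) (sletter Ta))"

definition wimg :: "abx list \<Rightarrow> ab ser" where
  "wimg w = foldr (\<lambda>l acc. smul (limg l) acc) w sone"

definition subst_comm :: "abx ser \<Rightarrow> ab ser" where
  "subst_comm p = (\<lambda>u. \<Sum>w\<in>{w. p w \<noteq> 0}. p w * wimg w u)"

end

theory Submission
  imports Defs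
begin

text \<open>
  Write A, B for the letters a, b, X = AB - BA, and let
  D = \<Sum>_n d_n(A,B,X), so that the substituted c-series is S = A D B.  The
  recurrence for d_n says exactly that D = 1 + D (A D B - B A), and the series
  P = \<Sum>_n A^n B^n satisfies P = 1 + A P B.  From these two equations alone one
  derives (1 - A D B) P = 1 = P (1 - A D B): the differences of the two sides
  satisfy homogeneous fixed-point equations Z = G Z + A Z B (or Z = Z G + A Z B)
  with G of zero constant term, and such an equation forces Z = 0 by induction on
  word length.
\<close>

section \<open>The ring of noncommutative formal power series\<close>

lemma smul_Nil [simp]: "smul f g [] = f [] * g []"
  by (simp add: smul_def)

lemma smul_Cons: "smul f g (x # w) = f [] * g (x # w) + smul (\<lambda>v. f (x # v)) g w"
  unfolding smul_def length_Cons sum.atMost_Suc_shift by simp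

lemma smul_add_left: "smul (\<lambda>v. f v + h v) g w = smul f g w + smul h g w"
  by (simp add: smul_def sum.distrib ring_distribs)

lemma smul_add_right: "smul f (\<lambda>v. g v + h v) w = smul f g w + smul f h w"
  by (simp add: smul_def sum.distrib ring_distribs)

lemma smul_scal_left: "smul (\<lambda>v. k * f v) g w = k * smul f g w"
  by (simp add: smul_def sum_distrib_left mult.assoc)

lemma smul_assoc: "smul (smul f g) h w = smul f (smul g h) w"
proof (induction w arbitrary: f)
  case Nil
  then show ?case by simp
next
  case (Cons x w)
  have shift: "(\<lambda>v. smul f g (x # v)) = (\<lambda>v. f [] * g (x # v) + smul (\<lambda>v. f (x # v)) g v)"
    by (simp add: smul_Cons)
  have "smul (smul f g) h (x # w) = f [] * g [] * h (x # w) + smul (\<lambda>v. smul f g (x # v)) h w"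
    by (simp add: smul_Cons)
  also have "smul (\<lambda>v. smul f g (x # v)) h w
     = f [] * smul (\<lambda>v. g (x # v)) h w + smul (smul (\<lambda>v. f (x # v)) g) h w"
    unfolding shift by (simp add: smul_add_left smul_scal_left)
  also have "smul (smul (\<lambda>v. f (x # v)) g) h w = smul (\<lambda>v. f (x # v)) (smul g h) w"
    by (rule Cons.IH)
  finally show ?case by (simp add: smul_Cons algebra_simps)
qed

lemma smul_one_left: "smul sone f w = f w"
proof (cases w)
  case (Cons x v)
  have "smul (\<lambda>u. sone (x # u)) f v = 0" by (simp add: smul_def sone_def)
  then show ?thesis using Cons by (simp add: smul_Cons sone_def)
qed (simp add: sone_def)

lemma smul_one_right: "smul f sone w = f w"
  by (induction w arbitrary: f) (simp_all add: smul_Cons sone_def)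

text \<open>A copy of the coefficient functions as a type, so that the ring axioms
  proved above become available through the type class ring_1.\<close>

typedef 'l nc = "UNIV :: ('l list \<Rightarrow> int) set" morphisms coeff Ser by auto

lemma coeff_Ser [simp]: "coeff (Ser f) = f"
  by (simp add: Ser_inverse)

lemma nc_eqI: "(\<And>w. coeff x w = coeff y w) \<Longrightarrow> x = y"
  by (metis coeff_inverse ext)

instantiation nc :: (type) ring_1
begin
definition "0 = Ser (\<lambda>_. 0)"
definition "1 = Ser sone"
definition "x + y = Ser (\<lambda>w. coeff x w + coeff y w)"
definition "x - y = Ser (\<lambda>w. coeff x w - coeff y w)"
definition "- x = Ser (\<lambda>w. - coeff x w)"
definition "x * y = Ser (smul (coeff x) (coeff y))"
instance
proof
  fix a b c :: "'a nc"
  show "a * b * c = a * (b * c)"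
    by (rule nc_eqI) (simp add: times_nc_def smul_assoc)
  show "a + b + c = a + (b + c)" "a + b = b + a" "0 + a = a" "- a + a = 0" "a - b = a + - b"
    by (rule nc_eqI; simp add: plus_nc_def zero_nc_def uminus_nc_def minus_nc_def)+
  show "1 * a = a" "a * 1 = a"
    by (rule nc_eqI; simp add: times_nc_def one_nc_def smul_one_left smul_one_right)+
  show "(a + b) * c = a * c + b * c" "a * (b + c) = a * b + a * c"
    by (rule nc_eqI; simp add: times_nc_def plus_nc_def smul_add_left smul_add_right)+
  have "coeff (0::'a nc) [] \<noteq> coeff 1 []"
    by (simp add: zero_nc_def one_nc_def sone_def)
  then show "(0::'a nc) \<noteq> 1" by metis
qed
end

lemma coeff_zero [simp]: "coeff 0 w = 0" by (simp add: zero_nc_def)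
lemma coeff_one: "coeff 1 w = (if w = [] then 1 else 0)" by (simp add: one_nc_def sone_def)
lemma coeff_add [simp]: "coeff (x + y) w = coeff x w + coeff y w" by (simp add: plus_nc_def)
lemma coeff_diff [simp]: "coeff (x - y) w = coeff x w - coeff y w" by (simp add: minus_nc_def)
lemma coeff_uminus [simp]: "coeff (- x) w = - coeff x w" by (simp add: uminus_nc_def)
lemma coeff_mult: "coeff (x * y) = smul (coeff x) (coeff y)" by (simp add: times_nc_def)
lemma Ser_mult: "Ser (smul f g) = Ser f * Ser g" by (simp add: times_nc_def)

lemma coeff_sum: "coeff (sum F A) w = (\<Sum>a\<in>A. coeff (F a) w)"
  by (induction A rule: infinite_finite_induct) auto

lemma coeff_of_int_mult: "coeff (of_int k * x :: 'l nc) w = k * coeff x w"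
proof -
  have of_nat_case: "coeff (of_nat n * x :: 'l nc) w = int n * coeff x w" for n
    by (induction n) (simp_all add: algebra_simps)
  show ?thesis
  proof (cases k rule: int_cases)
    case (nonneg n)
    then show ?thesis using of_nat_case by simp
  next
    case (neg n)
    then have "(of_int k :: 'l nc) = - of_nat (Suc n)" by simp
    then have "(of_int k * x :: 'l nc) = - (of_nat (Suc n) * x)" by (metis mult_minus_left)
    then show ?thesis using of_nat_case[of "Suc n"] neg by (simp del: of_nat_Suc)
  qed
qed

section \<open>Letters and homogeneous series\<close>

definition Ltr :: "'l \<Rightarrow> 'l nc" where "Ltr l = Ser (sletter l)"

lemma coeff_Ltr_mult:
  "coeff (Ltr l * f) w = (case w of [] \<Rightarrow> 0 | x # v \<Rightarrow> if x = l then coeff f v else 0)"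
proof (cases w)
  case Nil
  then show ?thesis by (simp add: coeff_mult Ltr_def sletter_def)
next
  case (Cons x v)
  have first_letter: "(\<lambda>u. sletter l (x # u)) = (if x = l then sone else (\<lambda>_. 0))"
    by (auto simp: sletter_def sone_def)
  have "coeff (Ltr l * f) w = sletter l [] * coeff f (x # v) + smul (\<lambda>u. sletter l (x # u)) (coeff f) v"
    using Cons by (simp add: coeff_mult Ltr_def smul_Cons)
  also have "\<dots> = (if x = l then coeff f v else 0)"
    by (simp add: first_letter smul_one_left) (simp add: sletter_def smul_def)
  finally show ?thesis using Cons by simp
qed

lemma coeff_mult_Ltr:
  "coeff (f * Ltr l) w = (if w \<noteq> [] \<and> last w = l then coeff f (butlast w) else 0)"
proof -
  have "smul g (sletter l) w = (if w \<noteq> [] \<and> last w = l then g (butlast w) else 0)" for g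
    by (induction w arbitrary: g) (auto simp: smul_Cons sletter_def)
  then show ?thesis by (simp add: coeff_mult Ltr_def)
qed

lemma word_cases_by_ends: "w = [] \<or> (\<exists>x. w = [x]) \<or> (\<exists>x v y. w = x # v @ [y])"
  by (metis append_butlast_last_id list.exhaust)

lemma coeff_sandwich_short: "length w < 2 \<Longrightarrow> coeff (Ltr a * f * Ltr b) w = 0"
  using word_cases_by_ends[of w] by (auto simp: coeff_mult_Ltr coeff_Ltr_mult)

lemma coeff_sandwich:
  "coeff (Ltr a * f * Ltr b) (x # v @ [y]) = (if x = a \<and> y = b then coeff f v else 0)"
  by (simp add: coeff_mult_Ltr coeff_Ltr_mult butlast_append)

definition homog :: "'l nc \<Rightarrow> nat \<Rightarrow> bool" where
  "homog x k \<longleftrightarrow> (\<forall>v. coeff x v \<noteq> 0 \<longrightarrow> length v = k)"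

lemma homog_zero: "homog 0 k" by (simp add: homog_def)
lemma homog_one: "homog 1 0" by (simp add: homog_def coeff_one)
lemma homog_Ltr: "homog (Ltr l) 1" by (simp add: homog_def Ltr_def sletter_def)
lemma homog_add: "homog x k \<Longrightarrow> homog y k \<Longrightarrow> homog (x + y) k"
  unfolding homog_def by (metis add.right_neutral coeff_add)
lemma homog_diff: "homog x k \<Longrightarrow> homog y k \<Longrightarrow> homog (x - y) k"
  unfolding homog_def by (metis coeff_diff diff_zero)
lemma homog_sum: "(\<And>a. a \<in> A \<Longrightarrow> homog (F a) k) \<Longrightarrow> homog (sum F A) k"
  by (induction A rule: infinite_finite_induct) (auto simp: homog_zero homog_add)

lemma homog_mult:
  assumes "homog x p" "homog y q"
  shows "homog (x * y) (p + q)"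
  unfolding homog_def
proof (intro allI impI)
  fix v assume "coeff (x * y) v \<noteq> 0"
  then obtain i where "coeff x (take i v) * coeff y (drop i v) \<noteq> 0" "i \<le> length v"
    unfolding coeff_mult smul_def by (meson atMost_iff sum.not_neutral_contains_not_neutral)
  then show "length v = p + q"
    using assms unfolding homog_def by (metis length_append append_take_drop_id mult_eq_0_iff)
qed

lemma homog_power: "homog x p \<Longrightarrow> homog (x ^ n) (n * p)"
  by (induction n) (auto simp: homog_one dest: homog_mult)

lemma homog_sandwich: "homog x k \<Longrightarrow> homog (Ltr a * x * Ltr b) (k + 2)"
  using homog_mult[OF homog_mult[OF homog_Ltr] homog_Ltr] by simp

lemma sum_eq_single_term:
  "finite A \<Longrightarrow> a \<in> A \<Longrightarrow> (\<And>i. i \<in> A \<Longrightarrow> i \<noteq> a \<Longrightarrow> f i = 0) \<Longrightarrow> sum f A = f a"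
  by (simp add: sum.remove sum.neutral)

section \<open>Contracting fixed-point equations\<close>

lemma zero_by_length_induction:
  assumes "\<And>w. (\<forall>v. length v < length w \<longrightarrow> coeff Z v = 0) \<Longrightarrow> coeff Z w = 0"
  shows "Z = 0"
proof (rule nc_eqI)
  show "coeff Z w = coeff 0 w" for w
    by (induction w rule: measure_induct_rule[of length]) (use assms in auto)
qed

lemma coeff_mult_left_shorter:
  fixes G Z :: "'l nc" and w :: "'l list"
  assumes "coeff G [] = 0" "\<forall>v. length v < length w \<longrightarrow> coeff Z v = 0"
  shows "coeff (G * Z) w = 0"
  unfolding coeff_mult smul_def
proof (rule sum.neutral, intro ballI)
  fix i assume "i \<in> {..length w}"
  then show "coeff G (take i w) * coeff Z (drop i w) = 0"
    using assms by (cases "i = 0") auto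
qed

lemma coeff_mult_right_shorter:
  fixes G Z :: "'l nc" and w :: "'l list"
  assumes "coeff G [] = 0" "\<forall>v. length v < length w \<longrightarrow> coeff Z v = 0"
  shows "coeff (Z * G) w = 0"
  unfolding coeff_mult smul_def
proof (rule sum.neutral, intro ballI)
  fix i assume "i \<in> {..length w}"
  then show "coeff Z (take i w) * coeff G (drop i w) = 0"
    using assms by (cases "i = length w") auto
qed

lemma coeff_sandwich_shorter:
  assumes "\<forall>v. length v < length w \<longrightarrow> coeff Z v = 0"
  shows "coeff (Ltr a * Z * Ltr b) w = 0"
  using word_cases_by_ends[of w] assms
  by (auto simp: coeff_sandwich_short coeff_sandwich)

lemma fixed_point_left_zero:
  fixes G Z :: "'l nc"
  assumes "coeff G [] = 0" and Z: "Z = G * Z + Ltr a * Z * Ltr b"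
  shows "Z = 0"
proof (rule zero_by_length_induction)
  fix w :: "'l list" assume "\<forall>v. length v < length w \<longrightarrow> coeff Z v = 0"
  then have "coeff (G * Z) w = 0" "coeff (Ltr a * Z * Ltr b) w = 0"
    using assms(1) by (simp_all add: coeff_mult_left_shorter coeff_sandwich_shorter)
  then show "coeff Z w = 0" by (subst Z) simp
qed

lemma fixed_point_right_zero:
  fixes G Z :: "'l nc"
  assumes "coeff G [] = 0" and Z: "Z = Z * G + Ltr a * Z * Ltr b"
  shows "Z = 0"
proof (rule zero_by_length_induction)
  fix w :: "'l list" assume "\<forall>v. length v < length w \<longrightarrow> coeff Z v = 0"
  then have "coeff (Z * G) w = 0" "coeff (Ltr a * Z * Ltr b) w = 0"
    using assms(1) by (simp_all add: coeff_mult_right_shorter coeff_sandwich_shorter)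
  then show "coeff Z w = 0" by (subst Z) simp
qed

lemma left_inverse_from_right:
  assumes DM: "D * M = 1" and M0: "coeff M [] = 1"
  shows "M * D = 1"
proof -
  define Z where "Z = M * D - 1"
  have "Z * M = M * (D * M) - M" by (simp add: Z_def left_diff_distrib mult.assoc)
  then have "Z = Z * (1 - M)" by (simp add: DM right_diff_distrib)
  moreover have "coeff (1 - M) [] = 0" using M0 by (simp add: coeff_one)
  ultimately have "Z = 0"
    by (intro zero_by_length_induction) (metis coeff_mult_right_shorter)
  then show ?thesis by (simp add: Z_def)
qed

text \<open>Both sides are proved through the auxiliary
  identity D (1 - A D B + B A) = 1 and a contracting fixed-point equation.\<close>

lemma sandwich_inverse_left:
  fixes D P :: "'l nc"
  assumes D: "D = 1 + D * (Ltr a * D * Ltr b - Ltr b * Ltr a)"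
    and P: "P = 1 + Ltr a * P * Ltr b"
  shows "(1 - Ltr a * D * Ltr b) * P = 1"
proof -
  let ?A = "Ltr a" and ?B = "Ltr b"
  let ?G = "?A * D * ?B - ?B * ?A" and ?M = "1 - ?A * D * ?B + ?B * ?A"
  have "D * ?M = D - D * ?G" by (simp add: algebra_simps)
  also have "\<dots> = 1" by (subst (1) D) simp
  finally have "D * ?M = 1" .
  moreover have "coeff ?M [] = 1" by (simp add: coeff_one coeff_mult_Ltr)
  ultimately have MD: "?M * D = 1" by (rule left_inverse_from_right)
  define Z where "Z = P - D * (1 + ?B * ?A * P)"
  have "?M * Z = ?M * P - (?M * D) * (1 + ?B * ?A * P)"
    by (simp add: Z_def right_diff_distrib mult.assoc)
  also have "\<dots> = ?M * P - (1 + ?B * ?A * P)" by (simp only: MD mult_1_left)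
  also have "\<dots> = P - 1 - ?A * D * ?B * P" by (simp add: algebra_simps)
  finally have MZ: "?M * Z = P - 1 - ?A * D * ?B * P" .
  have "?A * Z * ?B = ?A * P * ?B - ?A * D * ?B - ?A * D * ?B * (?A * P * ?B)"
    by (simp add: Z_def algebra_simps)
  also have "\<dots> = P - 1 - ?A * D * ?B * P"
    by (subst (2 3) P) (simp add: algebra_simps)
  finally have AZB: "?A * Z * ?B = P - 1 - ?A * D * ?B * P" .
  have "?G * Z = Z - ?M * Z" by (simp add: algebra_simps)
  then have "Z = ?G * Z + ?A * Z * ?B" using MZ AZB by simp
  moreover have "coeff ?G [] = 0" by (simp add: coeff_mult_Ltr)
  ultimately have "Z = 0" by (intro fixed_point_left_zero[of ?G Z a b])
  then have "P - 1 - ?A * D * ?B * P = 0" using AZB by simp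
  then show ?thesis by (simp add: algebra_simps)
qed

lemma sandwich_inverse_right:
  fixes D P :: "'l nc"
  assumes D: "D = 1 + D * (Ltr a * D * Ltr b - Ltr b * Ltr a)"
    and P: "P = 1 + Ltr a * P * Ltr b"
  shows "P * (1 - Ltr a * D * Ltr b) = 1"
proof -
  let ?A = "Ltr a" and ?B = "Ltr b"
  let ?G = "?A * D * ?B - ?B * ?A" and ?M = "1 - ?A * D * ?B + ?B * ?A"
  have "D * ?M = D - D * ?G" by (simp add: algebra_simps)
  also have "\<dots> = 1" by (subst (1) D) simp
  finally have DM: "D * ?M = 1" .
  define Z where "Z = P - (1 + P * ?B * ?A) * D"
  have "Z * ?M = P * ?M - (1 + P * ?B * ?A) * (D * ?M)"
    by (simp add: Z_def left_diff_distrib mult.assoc)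
  also have "\<dots> = P * ?M - (1 + P * ?B * ?A)" by (simp only: DM mult_1_right)
  also have "\<dots> = P - 1 - P * ?A * D * ?B" by (simp add: algebra_simps)
  finally have ZM: "Z * ?M = P - 1 - P * ?A * D * ?B" .
  have "?A * Z * ?B = ?A * P * ?B - ?A * D * ?B - (?A * P * ?B) * ?A * D * ?B"
    by (simp add: Z_def algebra_simps)
  also have "\<dots> = P - 1 - P * ?A * D * ?B"
    by (subst (2 3) P) (simp add: algebra_simps)
  finally have AZB: "?A * Z * ?B = P - 1 - P * ?A * D * ?B" .
  have "Z * ?G = Z - Z * ?M" by (simp add: algebra_simps)
  then have "Z = Z * ?G + ?A * Z * ?B" using ZM AZB by simp
  moreover have "coeff ?G [] = 0" by (simp add: coeff_mult_Ltr)
  ultimately have "Z = 0" by (intro fixed_point_right_zero[of ?G Z a b])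
  then have "P - 1 - P * ?A * D * ?B = 0" using AZB by simp
  then show ?thesis by (simp add: algebra_simps)
qed

section \<open>Infinite sums of evenly graded families\<close>

text \<open>A family is evenly graded if its n-th member is homogeneous of degree 2n; its
  formal sum then has, at each word, a single contributing term.\<close>

definition even_graded :: "(nat \<Rightarrow> 'l nc) \<Rightarrow> bool" where
  "even_graded F \<longleftrightarrow> (\<forall>n. homog (F n) (2 * n))"

definition gsum :: "(nat \<Rightarrow> 'l nc) \<Rightarrow> 'l nc" where
  "gsum F = Ser (fsum (\<lambda>n. coeff (F n)))"

lemma fsum_single: "{n. F n w \<noteq> 0} \<subseteq> {m} \<Longrightarrow> fsum F w = F m w"
  unfolding fsum_def by (cases "F m w = 0") (auto simp: subset_singleton_iff)

lemma fsum_shift: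
  assumes "\<And>w. F 0 w = 0"
  shows "fsum (\<lambda>n. F (Suc n)) = fsum F"
proof
  fix w
  have "{n. F n w \<noteq> 0} = Suc ` {n. F (Suc n) w \<noteq> 0}"
    using assms by (auto simp: image_iff) (metis gr0_conv_Suc neq0_conv)
  then show "fsum (\<lambda>n. F (Suc n)) w = fsum F w"
    unfolding fsum_def by (simp add: sum.reindex)
qed

lemma coeff_gsum:
  assumes "even_graded F"
  shows "coeff (gsum F) w = coeff (F (length w div 2)) w"
proof -
  have "{n. coeff (F n) w \<noteq> 0} \<subseteq> {length w div 2}"
    using assms by (auto simp: even_graded_def homog_def)
  then show ?thesis unfolding gsum_def coeff_Ser by (rule fsum_single)
qed

lemma even_graded_add: "even_graded F \<Longrightarrow> even_graded G \<Longrightarrow> even_graded (\<lambda>n. F n + G n)"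
  by (simp add: even_graded_def homog_add)

lemma even_graded_diff: "even_graded F \<Longrightarrow> even_graded G \<Longrightarrow> even_graded (\<lambda>n. F n - G n)"
  by (simp add: even_graded_def homog_diff)

lemma gsum_add: "even_graded F \<Longrightarrow> even_graded G \<Longrightarrow> gsum F + gsum G = gsum (\<lambda>n. F n + G n)"
  by (rule nc_eqI) (simp add: coeff_gsum even_graded_add)

lemma gsum_diff: "even_graded F \<Longrightarrow> even_graded G \<Longrightarrow> gsum F - gsum G = gsum (\<lambda>n. F n - G n)"
  by (rule nc_eqI) (simp add: coeff_gsum even_graded_diff)

lemma even_graded_single: "homog x (2 * k) \<Longrightarrow> even_graded (\<lambda>n. if n = k then x else 0)"
  by (simp add: even_graded_def homog_zero)

lemma gsum_single:
  assumes "homog x (2 * k)"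
  shows "gsum (\<lambda>n. if n = k then x else 0) = x"
proof (rule nc_eqI)
  fix w
  show "coeff (gsum (\<lambda>n. if n = k then x else 0)) w = coeff x w"
    using assms unfolding coeff_gsum[OF even_graded_single[OF assms]] homog_def by auto
qed

lemma even_graded_cauchy:
  assumes "even_graded F" "even_graded G"
  shows "even_graded (\<lambda>n. \<Sum>a\<le>n. F a * G (n - a))"
  unfolding even_graded_def
proof (intro allI homog_sum)
  fix n a :: nat assume "a \<in> {..n}"
  then have "2 * n = 2 * a + 2 * (n - a)" by simp
  then show "homog (F a * G (n - a)) (2 * n)"
    using assms by (simp add: even_graded_def homog_mult)
qed

lemma coeff_gsum_truncate:
  assumes "even_graded F" "length v div 2 \<le> N"
  shows "coeff (gsum F) v = coeff (\<Sum>a\<le>N. F a) v"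
  unfolding coeff_gsum[OF assms(1)] coeff_sum
proof (rule sum_eq_single_term[symmetric])
  fix i assume "i \<noteq> length v div 2"
  then have "length v \<noteq> 2 * i" by auto
  then show "coeff (F i) v = 0"
    using assms(1) by (auto simp: even_graded_def homog_def)
qed (use assms(2) in auto)

lemma coeff_mult_cong:
  assumes "\<And>v. length v \<le> length w \<Longrightarrow> coeff x v = coeff x' v"
    and "\<And>v. length v \<le> length w \<Longrightarrow> coeff y v = coeff y' v"
  shows "coeff (x * y) w = coeff (x' * y') w"
  unfolding coeff_mult smul_def by (intro sum.cong refl) (simp add: assms)

lemma gsum_cauchy:
  fixes F G :: "nat \<Rightarrow> 'l nc"
  assumes F: "even_graded F" and G: "even_graded G"
  shows "gsum F * gsum G = gsum (\<lambda>n. \<Sum>a\<le>n. F a * G (n - a))"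
proof (rule nc_eqI)
  fix w :: "'l list"
  define N where "N = length w div 2"
  have "coeff (gsum F * gsum G) w = coeff ((\<Sum>a\<le>N. F a) * (\<Sum>b\<le>N. G b)) w"
    by (intro coeff_mult_cong coeff_gsum_truncate F G) (simp_all add: N_def div_le_mono)
  also have "\<dots> = (\<Sum>a\<le>N. \<Sum>b\<le>N. coeff (F a * G b) w)"
    by (simp add: sum_product coeff_sum)
  also have "\<dots> = (\<Sum>a\<le>N. coeff (F a * G (N - a)) w)"
  proof (intro sum.cong refl sum_eq_single_term)
    fix a b assume "a \<in> {..N}" "b \<in> {..N}" "b \<noteq> N - a"
    then have "length w \<noteq> 2 * a + 2 * b" by (auto simp: N_def)
    moreover have "homog (F a * G b) (2 * a + 2 * b)"
      using F G by (simp add: even_graded_def homog_mult)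
    ultimately show "coeff (F a * G b) w = 0" by (auto simp: homog_def)
  qed auto
  also have "\<dots> = coeff (gsum (\<lambda>n. \<Sum>a\<le>n. F a * G (n - a))) w"
    by (simp add: coeff_gsum[OF even_graded_cauchy[OF F G]] coeff_sum N_def)
  finally show "coeff (gsum F * gsum G) w = coeff (gsum (\<lambda>n. \<Sum>a\<le>n. F a * G (n - a))) w" .
qed

definition sandwich_shift :: "'l \<Rightarrow> 'l \<Rightarrow> (nat \<Rightarrow> 'l nc) \<Rightarrow> nat \<Rightarrow> 'l nc" where
  "sandwich_shift a b F n = (if n = 0 then 0 else Ltr a * F (n - 1) * Ltr b)"

lemma even_graded_sandwich_shift: "even_graded F \<Longrightarrow> even_graded (sandwich_shift a b F)"
  unfolding even_graded_def sandwich_shift_def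
proof (intro allI)
  fix n assume F: "\<forall>n. homog (F n) (2 * n)"
  show "homog (if n = 0 then 0 else Ltr a * F (n - 1) * Ltr b) (2 * n)"
  proof (cases n)
    case (Suc m)
    then show ?thesis using homog_sandwich[of "F m" "2 * m" a b] F by simp
  qed (simp add: homog_zero)
qed

lemma gsum_sandwich:
  assumes F: "even_graded F"
  shows "Ltr a * gsum F * Ltr b = gsum (sandwich_shift a b F)"
proof (rule nc_eqI)
  fix w
  show "coeff (Ltr a * gsum F * Ltr b) w = coeff (gsum (sandwich_shift a b F)) w"
    unfolding coeff_gsum[OF even_graded_sandwich_shift[OF F]] sandwich_shift_def
    using word_cases_by_ends[of w]
    by (auto simp: coeff_sandwich_short coeff_sandwich coeff_gsum[OF F])
qed

section \<open>Substitution of polynomials\<close>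

definition supp :: "'l ser \<Rightarrow> 'l list set" where "supp p = {w. p w \<noteq> 0}"

lemma finite_supp_sone: "finite (supp sone)"
  by (rule finite_subset[of _ "{[]}"]) (auto simp: supp_def sone_def)

lemma finite_supp_sletter: "finite (supp (sletter l))"
  by (rule finite_subset[of _ "{[l]}"]) (auto simp: supp_def sletter_def)

lemma supp_sadd: "supp (sadd p q) \<subseteq> supp p \<union> supp q"
  by (auto simp: supp_def sadd_def)

lemma finite_supp_sadd: "finite (supp p) \<Longrightarrow> finite (supp q) \<Longrightarrow> finite (supp (sadd p q))"
  by (rule finite_subset[OF supp_sadd]) auto

lemma supp_sum: "supp (\<lambda>w. \<Sum>k\<in>K. F k w) \<subseteq> (\<Union>k\<in>K. supp (F k))"
proof
  fix w assume "w \<in> supp (\<lambda>w. \<Sum>k\<in>K. F k w)"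
  then have "(\<Sum>k\<in>K. F k w) \<noteq> 0" by (simp add: supp_def)
  then obtain k where "k \<in> K" "F k w \<noteq> 0" by (meson sum.not_neutral_contains_not_neutral)
  then show "w \<in> (\<Union>k\<in>K. supp (F k))" by (auto simp: supp_def)
qed

lemma finite_supp_sum:
  "finite K \<Longrightarrow> (\<And>k. k \<in> K \<Longrightarrow> finite (supp (F k))) \<Longrightarrow> finite (supp (\<lambda>w. \<Sum>k\<in>K. F k w))"
  by (rule finite_subset[OF supp_sum]) auto

lemma supp_smul: "supp (smul p q) \<subseteq> (\<lambda>x. fst x @ snd x) ` (supp p \<times> supp q)"
proof
  fix w assume "w \<in> supp (smul p q)"
  then have "(\<Sum>i\<le>length w. p (take i w) * q (drop i w)) \<noteq> 0" by (simp add: supp_def smul_def)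
  then obtain i where "p (take i w) * q (drop i w) \<noteq> 0"
    by (meson sum.not_neutral_contains_not_neutral)
  then have "(take i w, drop i w) \<in> supp p \<times> supp q" by (auto simp: supp_def)
  then show "w \<in> (\<lambda>x. fst x @ snd x) ` (supp p \<times> supp q)"
    by (metis (no_types, lifting) append_take_drop_id fst_conv image_eqI snd_conv)
qed

lemma finite_supp_smul: "finite (supp p) \<Longrightarrow> finite (supp q) \<Longrightarrow> finite (supp (smul p q))"
  by (rule finite_subset[OF supp_smul]) auto

lemma smul_as_sum_over_factorisations:
  assumes "finite (supp p)" "finite (supp q)"
  shows "smul p q w = (\<Sum>x\<in>{x\<in>supp p \<times> supp q. fst x @ snd x = w}. p (fst x) * q (snd x))"
proof -
  define split where "split i = (take i w, drop i w)" for i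
  have inj: "inj_on split {..length w}"
    by (auto simp: inj_on_def split_def) (metis length_take min.absorb2)
  have "smul p q w = (\<Sum>i\<le>length w. p (fst (split i)) * q (snd (split i)))"
    by (simp add: smul_def split_def)
  also have "\<dots> = (\<Sum>x\<in>split ` {..length w}. p (fst x) * q (snd x))"
    by (simp add: sum.reindex[OF inj])
  also have "\<dots> = (\<Sum>x\<in>{x\<in>supp p \<times> supp q. fst x @ snd x = w}. p (fst x) * q (snd x))"
  proof (rule sum.mono_neutral_right)
    show "{x \<in> supp p \<times> supp q. fst x @ snd x = w} \<subseteq> split ` {..length w}"
    proof
      fix x assume "x \<in> {x \<in> supp p \<times> supp q. fst x @ snd x = w}"
      then have "fst x @ snd x = w" by simp
      then have "x = split (length (fst x))" "length (fst x) \<le> length w"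
        by (auto simp: split_def prod_eq_iff)
      then show "x \<in> split ` {..length w}" by auto
    qed
    show "\<forall>x\<in>split ` {..length w} - {x \<in> supp p \<times> supp q. fst x @ snd x = w}.
            p (fst x) * q (snd x) = 0"
      by (auto simp: split_def supp_def)
  qed simp
  finally show ?thesis .
qed

definition Limg :: "abx \<Rightarrow> ab nc" where "Limg l = Ser (limg l)"
definition Wimg :: "abx list \<Rightarrow> ab nc" where "Wimg w = Ser (wimg w)"
definition sub :: "abx ser \<Rightarrow> ab nc" where "sub p = Ser (subst_comm p)"

lemma Limg_La: "Limg La = Ltr Ta" by (simp add: Limg_def Ltr_def)
lemma Limg_Lb: "Limg Lb = Ltr Tb" by (simp add: Limg_def Ltr_def)
lemma Limg_Lx: "Limg Lx = Ltr Ta * Ltr Tb - Ltr Tb * Ltr Ta"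
  by (simp add: Limg_def Ltr_def ssub_def minus_nc_def times_nc_def)

lemma Wimg_Nil: "Wimg [] = 1" by (simp add: Wimg_def wimg_def one_nc_def)
lemma Wimg_Cons: "Wimg (l # u) = Limg l * Wimg u"
  by (simp add: Wimg_def wimg_def Limg_def Ser_mult)
lemma Wimg_append: "Wimg (u @ v) = Wimg u * Wimg v"
  by (induction u) (simp_all add: Wimg_Nil Wimg_Cons mult.assoc)

lemma sub_eq:
  assumes "finite W" "supp p \<subseteq> W"
  shows "sub p = (\<Sum>w\<in>W. of_int (p w) * Wimg w)"
proof (rule nc_eqI)
  fix u
  have "coeff (sub p) u = (\<Sum>w\<in>supp p. p w * wimg w u)"
    by (simp add: sub_def subst_comm_def supp_def)
  also have "\<dots> = (\<Sum>w\<in>W. p w * wimg w u)"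
    by (rule sum.mono_neutral_left) (use assms in \<open>auto simp: supp_def\<close>)
  also have "\<dots> = coeff (\<Sum>w\<in>W. of_int (p w) * Wimg w) u"
    by (simp add: coeff_sum coeff_of_int_mult Wimg_def)
  finally show "coeff (sub p) u = coeff (\<Sum>w\<in>W. of_int (p w) * Wimg w) u" .
qed

lemma sub_sone: "sub sone = 1"
  by (subst sub_eq[of "{[]}"]) (auto simp: supp_def sone_def Wimg_Nil)

lemma sub_sletter: "sub (sletter l) = Limg l"
  by (subst sub_eq[of "{[l]}"]) (auto simp: supp_def sletter_def Wimg_Cons Wimg_Nil)

lemma sub_sadd:
  assumes "finite (supp p)" "finite (supp q)"
  shows "sub (sadd p q) = sub p + sub q"
proof -
  let ?W = "supp p \<union> supp q"
  have "sub (sadd p q) = (\<Sum>w\<in>?W. of_int (sadd p q w) * Wimg w)"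
    using assms supp_sadd by (intro sub_eq) auto
  also have "\<dots> = (\<Sum>w\<in>?W. of_int (p w) * Wimg w) + (\<Sum>w\<in>?W. of_int (q w) * Wimg w)"
    by (simp add: sadd_def sum.distrib ring_distribs)
  also have "\<dots> = sub p + sub q"
    using assms by (simp add: sub_eq[of ?W])
  finally show ?thesis .
qed

lemma sub_sum:
  assumes "finite K" "\<And>k. k \<in> K \<Longrightarrow> finite (supp (F k))"
  shows "sub (\<lambda>w. \<Sum>k\<in>K. F k w) = (\<Sum>k\<in>K. sub (F k))"
proof -
  let ?W = "\<Union>k\<in>K. supp (F k)"
  have fin: "finite ?W" using assms by auto
  have "sub (\<lambda>w. \<Sum>k\<in>K. F k w) = (\<Sum>w\<in>?W. of_int (\<Sum>k\<in>K. F k w) * Wimg w)"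
    using fin supp_sum by (intro sub_eq) auto
  also have "\<dots> = (\<Sum>k\<in>K. \<Sum>w\<in>?W. of_int (F k w) * Wimg w)"
    by (simp add: sum_distrib_right sum.swap[of _ _ K])
  also have "\<dots> = (\<Sum>k\<in>K. sub (F k))"
    using fin by (intro sum.cong refl, rule sub_eq[symmetric]) auto
  finally show ?thesis .
qed

lemma sub_smul:
  assumes fp: "finite (supp p)" and fq: "finite (supp q)"
  shows "sub (smul p q) = sub p * sub q"
proof -
  let ?UV = "supp p \<times> supp q"
  let ?cat = "\<lambda>x::abx list \<times> abx list. fst x @ snd x"
  have fin: "finite ?UV" using assms by simp
  have scalars: "of_int k * x * (of_int m * y) = of_int (k * m) * (x * y)" for k m and x y :: "ab nc"
    by (metis mult.assoc mult_of_int_commute of_int_mult)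
  have "sub (smul p q) = (\<Sum>w\<in>?cat ` ?UV. of_int (smul p q w) * Wimg w)"
    by (intro sub_eq supp_smul finite_imageI fin)
  also have "\<dots> = (\<Sum>w\<in>?cat ` ?UV. \<Sum>x\<in>{x\<in>?UV. ?cat x = w}.
                      of_int (p (fst x) * q (snd x)) * Wimg (?cat x))"
    unfolding smul_as_sum_over_factorisations[OF fp fq] of_int_sum sum_distrib_right
    by (intro sum.cong refl) auto
  also have "\<dots> = (\<Sum>x\<in>?UV. of_int (p (fst x) * q (snd x)) * Wimg (?cat x))"
    by (rule sum.group[OF fin finite_imageI[OF fin]]) auto
  also have "\<dots> = (\<Sum>x\<in>?UV. (of_int (p (fst x)) * Wimg (fst x)) * (of_int (q (snd x)) * Wimg (snd x)))"
    by (simp add: scalars Wimg_append)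
  also have "\<dots> = (\<Sum>u\<in>supp p. of_int (p u) * Wimg u) * (\<Sum>v\<in>supp q. of_int (q v) * Wimg v)"
    unfolding sum_product sum.cartesian_product by (rule sum.cong) auto
  also have "\<dots> = sub p * sub q"
    using assms by (simp add: sub_eq)
  finally show ?thesis .
qed

section \<open>The substituted polynomials d_n\<close>

declare d.simps [simp del]

lemma finite_supp_d: "finite (supp (d n))"
proof (induction n rule: less_induct)
  case (less n)
  show ?case
  proof (cases "n \<le> 1")
    case True
    then show ?thesis by (subst d.simps) (simp add: finite_supp_sone)
  next
    case False
    have "finite (supp (smul (d (n - 1)) (sletter Lx)))"
      using less False by (intro finite_supp_smul finite_supp_sletter) auto
    moreover have "finite (supp (\<lambda>w. \<Sum>k\<in>{2..n-1}.
        smul (d (n - k)) (smul (sletter La) (smul (d k) (sletter Lb))) w))"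
      using less False by (intro finite_supp_sum finite_supp_smul finite_supp_sletter) auto
    ultimately show ?thesis
      using False by (subst d.simps) (simp add: finite_supp_sadd)
  qed
qed

lemma finite_supp_c: "finite (supp (c n))"
  unfolding c_def by (intro finite_supp_smul finite_supp_sletter finite_supp_d)

lemma sub_d_rec:
  assumes "2 \<le> n"
  shows "sub (d n) = sub (d (n - 1)) * Limg Lx
           + (\<Sum>k\<in>{2..n-1}. sub (d (n - k)) * (Ltr Ta * sub (d k) * Ltr Tb))"
proof -
  have fin_ab: "finite (supp (smul (sletter La) (smul (d k) (sletter Lb))))" for k
    by (intro finite_supp_smul finite_supp_sletter finite_supp_d)
  have sub_term: "sub (smul (d j) (smul (sletter La) (smul (d k) (sletter Lb))))
      = sub (d j) * (Ltr Ta * sub (d k) * Ltr Tb)" for j k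
    by (simp add: sub_smul finite_supp_smul finite_supp_sletter finite_supp_d fin_ab
        sub_sletter Limg_La Limg_Lb mult.assoc)
  have "sub (d n) = sub (smul (d (n - 1)) (sletter Lx))
      + sub (\<lambda>w. \<Sum>k\<in>{2..n-1}. smul (d (n - k)) (smul (sletter La) (smul (d k) (sletter Lb))) w)"
    using assms
    by (subst d.simps) (simp add: sub_sadd finite_supp_smul finite_supp_sletter finite_supp_d
        finite_supp_sum fin_ab)
  also have "\<dots> = sub (d (n - 1)) * Limg Lx
      + (\<Sum>k\<in>{2..n-1}. sub (d (n - k)) * (Ltr Ta * sub (d k) * Ltr Tb))"
    by (simp add: sub_sum sub_smul sub_term finite_supp_smul finite_supp_sletter finite_supp_d
        fin_ab sub_sletter)
  finally show ?thesis .
qed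

text \<open>E n is the image of d_(n+1); in these terms the recurrence reads
  E (m+1) = E m X + \<Sum>_(a<m) E a (A E (m-a) B).\<close>

definition E :: "nat \<Rightarrow> ab nc" where "E n = sub (d (Suc n))"

lemma E_0: "E 0 = 1"
  by (simp add: E_def d.simps sub_sone)

lemma E_Suc: "E (Suc m) = E m * Limg Lx + (\<Sum>a<m. E a * (Ltr Ta * E (m - a) * Ltr Tb))"
proof -
  have "(\<Sum>k\<in>{2..Suc m}. sub (d (Suc (Suc m) - k)) * (Ltr Ta * sub (d k) * Ltr Tb))
      = (\<Sum>a<m. E a * (Ltr Ta * E (m - a) * Ltr Tb))"
  proof (rule sum.reindex_bij_witness[of _ "\<lambda>a. Suc m - a" "\<lambda>k. Suc m - k"])
    fix a assume "a \<in> {..<m}"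
    then show "Suc m - (Suc m - a) = a" "Suc m - a \<in> {2..Suc m}" by auto
  next
    fix k assume "k \<in> {2..Suc m}"
    then show "Suc m - (Suc m - k) = k" "Suc m - k \<in> {..<m}"
      "E (Suc m - k) * (Ltr Ta * E (m - (Suc m - k)) * Ltr Tb)
         = sub (d (Suc (Suc m) - k)) * (Ltr Ta * sub (d k) * Ltr Tb)"
      by (auto simp: E_def Suc_diff_le)
  qed
  then show ?thesis
    using sub_d_rec[of "Suc (Suc m)"] by (simp add: E_def)
qed

lemma homog_Limg_Lx: "homog (Limg Lx) 2"
  unfolding Limg_Lx using homog_mult[OF homog_Ltr homog_Ltr]
  by (intro homog_diff) (simp_all add: numeral_2_eq_2)

lemma even_graded_E: "even_graded E"
  unfolding even_graded_def
proof
  show "homog (E n) (2 * n)" for n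
  proof (induction n rule: less_induct)
    case (less n)
    show ?case
    proof (cases n)
      case 0
      then show ?thesis by (simp add: E_0 homog_one)
    next
      case (Suc m)
      have IH: "homog (E k) (2 * k)" if "k \<le> m" for k
        using less Suc that by simp
      have head: "homog (E m * Limg Lx) (2 * Suc m)"
        using homog_mult[OF IH homog_Limg_Lx] by simp
      have tail: "homog (E a * (Ltr Ta * E (m - a) * Ltr Tb)) (2 * Suc m)" if "a \<in> {..<m}" for a
      proof -
        have "homog (E a * (Ltr Ta * E (m - a) * Ltr Tb)) (2 * a + (2 * (m - a) + 2))"
          using that by (intro homog_mult homog_sandwich IH) auto
        moreover have "2 * a + (2 * (m - a) + 2) = 2 * Suc m" using that by simp
        ultimately show ?thesis by simp
      qed
      show ?thesis
        unfolding Suc E_Suc by (intro homog_add homog_sum head tail)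
    qed
  qed
qed

text \<open>The recurrence as a Cauchy-product identity of graded families, the form in
  which it passes to the graded sum.\<close>

lemma E_as_cauchy_product:
  "E n = (if n = 0 then 1 else 0)
     + ((\<Sum>a\<le>n. E a * sandwich_shift Ta Tb E (n - a))
        - (\<Sum>a\<le>n. E a * (if n - a = 1 then Ltr Tb * Ltr Ta else 0)))"
proof (cases n)
  case 0
  then show ?thesis by (simp add: E_0 sandwich_shift_def)
next
  case (Suc m)
  let ?A = "Ltr Ta" and ?B = "Ltr Tb"
  have commutator_part:
    "(\<Sum>a\<le>Suc m. E a * (if Suc m - a = 1 then ?B * ?A else 0)) = E m * (?B * ?A)"
    by (subst sum_eq_single_term[of _ m]) auto
  have "(\<Sum>a\<le>Suc m. E a * sandwich_shift Ta Tb E (Suc m - a))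
      = (\<Sum>a<Suc m. E a * (?A * E (m - a) * ?B))"
    by (simp add: lessThan_Suc_atMost sandwich_shift_def)
  also have "\<dots> = (\<Sum>a<m. E a * (?A * E (m - a) * ?B)) + E m * (?A * ?B)"
    by (simp add: E_0)
  finally have sandwich_part:
    "(\<Sum>a\<le>Suc m. E a * sandwich_shift Ta Tb E (Suc m - a))
       = (\<Sum>a<m. E a * (?A * E (m - a) * ?B)) + E m * (?A * ?B)" .
  show ?thesis
    unfolding Suc sandwich_part commutator_part
    by (simp add: E_Suc Limg_Lx right_diff_distrib)
qed

lemma gsum_E_equation: "gsum E = 1 + gsum E * (Ltr Ta * gsum E * Ltr Tb - Ltr Tb * Ltr Ta)"
proof -
  let ?BA = "Ltr Tb * Ltr Ta"
  define unit :: "nat \<Rightarrow> ab nc" where "unit n = (if n = 0 then 1 else 0)" for n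
  define comm :: "nat \<Rightarrow> ab nc" where "comm n = (if n = 1 then ?BA else 0)" for n
  define C1 where "C1 n = (\<Sum>a\<le>n. E a * sandwich_shift Ta Tb E (n - a))" for n
  define C2 where "C2 n = (\<Sum>a\<le>n. E a * comm (n - a))" for n
  have homog_BA: "homog ?BA (2 * 1)"
    using homog_mult[OF homog_Ltr homog_Ltr] by (simp add: numeral_2_eq_2)
  have homog_unit: "homog (1 :: ab nc) (2 * 0)" by (simp add: homog_one)
  have gr_unit: "even_graded unit" unfolding unit_def by (rule even_graded_single[OF homog_unit])
  have gr_comm: "even_graded comm" unfolding comm_def by (rule even_graded_single[OF homog_BA])
  have gr_shift: "even_graded (sandwich_shift Ta Tb E)"
    by (rule even_graded_sandwich_shift[OF even_graded_E])
  have gr_C1: "even_graded C1" unfolding C1_def by (rule even_graded_cauchy[OF even_graded_E gr_shift])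
  have gr_C2: "even_graded C2" unfolding C2_def by (rule even_graded_cauchy[OF even_graded_E gr_comm])
  have "1 + gsum E * (Ltr Ta * gsum E * Ltr Tb - ?BA)
      = gsum unit + (gsum E * gsum (sandwich_shift Ta Tb E) - gsum E * gsum comm)"
    unfolding unit_def comm_def gsum_single[OF homog_unit] gsum_single[OF homog_BA]
      gsum_sandwich[OF even_graded_E] by (simp add: right_diff_distrib)
  also have "\<dots> = gsum unit + (gsum C1 - gsum C2)"
    unfolding C1_def C2_def
    by (simp add: gsum_cauchy[OF even_graded_E gr_shift] gsum_cauchy[OF even_graded_E gr_comm])
  also have "\<dots> = gsum (\<lambda>n. unit n + (C1 n - C2 n))"
    by (simp add: gsum_diff[OF gr_C1 gr_C2] gsum_add[OF gr_unit even_graded_diff[OF gr_C1 gr_C2]])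
  also have "(\<lambda>n. unit n + (C1 n - C2 n)) = E"
  proof
    show "unit n + (C1 n - C2 n) = E n" for n
      unfolding unit_def C1_def C2_def comm_def by (rule E_as_cauchy_product[symmetric])
  qed
  finally show ?thesis by simp
qed

lemma sub_c: "sub (c (Suc n)) = Ltr Ta * E n * Ltr Tb"
  unfolding c_def E_def
  by (simp add: sub_smul finite_supp_smul finite_supp_sletter finite_supp_d sub_sletter
      Limg_La Limg_Lb mult.assoc)

lemma subst_comm_c: "subst_comm (c (Suc n)) = coeff (sandwich_shift Ta Tb E (Suc n))"
proof -
  have "subst_comm (c (Suc n)) = coeff (sub (c (Suc n)))" by (simp add: sub_def)
  then show ?thesis by (simp add: sub_c sandwich_shift_def)
qed

lemma finite_subst_comm_c_terms: "finite {n. subst_comm (c (Suc n)) w \<noteq> 0}"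
proof (rule finite_subset)
  show "{n. subst_comm (c (Suc n)) w \<noteq> 0} \<subseteq> {length w div 2 - 1}"
    using even_graded_sandwich_shift[OF even_graded_E, of Ta Tb]
    by (auto simp: subst_comm_c even_graded_def homog_def)
qed simp

lemma fsum_subst_comm_c: "fsum (\<lambda>n. subst_comm (c (Suc n))) = coeff (Ltr Ta * gsum E * Ltr Tb)"
proof -
  have "fsum (\<lambda>n. subst_comm (c (Suc n))) = fsum (\<lambda>n. coeff (sandwich_shift Ta Tb E n))"
    unfolding subst_comm_c by (rule fsum_shift) (simp add: sandwich_shift_def)
  then show ?thesis
    unfolding gsum_sandwich[OF even_graded_E] by (simp add: gsum_def)
qed

section \<open>The series \<Sum>_n a^n b^n\<close>

definition power_pairs :: "nat \<Rightarrow> ab nc" where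
  "power_pairs n = Ltr Ta ^ n * Ltr Tb ^ n"

lemma even_graded_power_pairs: "even_graded power_pairs"
  unfolding even_graded_def power_pairs_def
proof
  show "homog (Ltr Ta ^ n * Ltr Tb ^ n) (2 * n)" for n
    using homog_mult[OF homog_power[OF homog_Ltr[of Ta], of n] homog_power[OF homog_Ltr[of Tb], of n]]
    by (simp add: mult_2)
qed

lemma fsum_power_pairs:
  "fsum (\<lambda>n. smul (spow (sletter Ta) n) (spow (sletter Tb) n)) = coeff (gsum power_pairs)"
proof -
  have "coeff (Ltr l ^ n) = spow (sletter l) n" for l :: ab and n
    by (induction n) (simp_all add: one_nc_def coeff_mult Ltr_def)
  then show ?thesis by (simp add: gsum_def power_pairs_def coeff_mult)
qed

lemma gsum_power_pairs_equation:
  "gsum power_pairs = 1 + Ltr Ta * gsum power_pairs * Ltr Tb"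
proof -
  define unit :: "nat \<Rightarrow> ab nc" where "unit n = (if n = 0 then 1 else 0)" for n
  have homog_unit: "homog (1 :: ab nc) (2 * 0)" by (simp add: homog_one)
  have gr_unit: "even_graded unit" unfolding unit_def by (rule even_graded_single[OF homog_unit])
  have gr_shift: "even_graded (sandwich_shift Ta Tb power_pairs)"
    by (rule even_graded_sandwich_shift[OF even_graded_power_pairs])
  have "1 + Ltr Ta * gsum power_pairs * Ltr Tb = gsum unit + gsum (sandwich_shift Ta Tb power_pairs)"
    unfolding unit_def gsum_single[OF homog_unit] gsum_sandwich[OF even_graded_power_pairs] ..
  also have "\<dots> = gsum (\<lambda>n. unit n + sandwich_shift Ta Tb power_pairs n)"
    by (rule gsum_add[OF gr_unit gr_shift])
  also have "(\<lambda>n. unit n + sandwich_shift Ta Tb power_pairs n) = power_pairs"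
  proof
    show "unit n + sandwich_shift Ta Tb power_pairs n = power_pairs n" for n
      by (cases n)
        (simp_all add: unit_def sandwich_shift_def power_pairs_def power_commutes mult.assoc)
  qed
  finally show ?thesis by simp
qed

theorem theorem1:
  defines "S \<equiv> fsum (\<lambda>n. subst_comm (c (Suc n)))"
      and "P \<equiv> fsum (\<lambda>n. smul (spow (sletter Ta) n) (spow (sletter Tb) n))"
  shows "(\<forall>n\<ge>1. finite {w. c n w \<noteq> 0})
         \<and> (\<forall>w. finite {n. subst_comm (c (Suc n)) w \<noteq> 0})
         \<and> smul (ssub sone S) P = sone \<and> smul P (ssub sone S) = sone"
proof -
  let ?D = "gsum E" and ?P = "gsum power_pairs"
  have one_minus_S: "Ser (ssub sone S) = 1 - Ltr Ta * ?D * Ltr Tb"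
    by (rule nc_eqI) (simp add: S_def fsum_subst_comm_c ssub_def one_nc_def)
  have P_eq: "Ser P = ?P"
    by (simp add: P_def fsum_power_pairs coeff_inverse)
  have "(1 - Ltr Ta * ?D * Ltr Tb) * ?P = 1" "?P * (1 - Ltr Ta * ?D * Ltr Tb) = 1"
    using gsum_E_equation gsum_power_pairs_equation
    by (rule sandwich_inverse_left, rule sandwich_inverse_right)
  then have "smul (ssub sone S) P = sone" "smul P (ssub sone S) = sone"
    by (metis coeff_Ser coeff_mult one_minus_S P_eq one_nc_def)+
  moreover have "\<forall>n\<ge>1. finite {w. c n w \<noteq> 0}"
    using finite_supp_c by (simp add: supp_def)
  ultimately show ?thesis
    using finite_subst_comm_c_terms by blast
qed

end
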